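(* Let $\mathcal{G}$ be the ladder graph. For every $\overline p\in(2,\infty)$ and every $\lambda>0$, $\lim_{p\to\overline p}\mathcal J_{p,\mathcal{G}}(\lambda)=\mathcal J_{\overline p,\mathcal{G}}(\lambda)$.
   Context: The ladder graph is the metric graph embedded in $\mathbb{R}^2$ with vertices $(k,0),(k,1)$, $k\in\mathbb{Z}$, and edges $[k,k+1]\times\{0\}$, $[k,k+1]\times\{1\}$, $\{k\}\times[0,1]$, all of length 1. $H^1(\mathcal{G})$: continuous functions, $H^1$ on each edge. For $p>2$, $\lambda\in\mathbb{R}$: $J_{p,\lambda}(v,\mathcal{G})=\frac12\|v'\|_2^2+\frac\lambda2\|v\|_2^2-\frac1p\|v\|_p^p$; $\mathcal N_{p,\lambda}(\mathcal{G})=\{v\in H^1(\mathcal{G})\setminus\{0\}:\|v'\|_2^2+\lambda\|v\|_2^2=\|v\|_p^p\}$; $\mathcal J_{p,\mathcal{G}}(\lambda)=\inf_{\mathcal N_{p,\lambda}(\mathcal{G})}J_{p,\lambda}(\cdot,\mathcal{G})$. *)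

theory Defs
  imports "HOL-Analysis.Analysis"
begin

datatype ladder_edge = Bot int | Top int | Rung int

fun edge_path :: "ladder_edge \<Rightarrow> real \<Rightarrow> real \<times> real" where
  "edge_path (Bot k) t = (of_int k + t, 0)"
| "edge_path (Top k) t = (of_int k + t, 1)"
| "edge_path (Rung k) t = (of_int k, t)"

definition ladder :: "(real \<times> real) set" where
  "ladder = (\<Union>e. edge_path e ` {0..1})"

definition is_weak_deriv01 :: "(real \<Rightarrow> real) \<Rightarrow> (real \<Rightarrow> real) \<Rightarrow> bool" where
  "is_weak_deriv01 f g \<longleftrightarrow>
     set_integrable lborel {0..1} g \<and>
     set_integrable lborel {0..1} (\<lambda>t. (g t)\<^sup>2) \<and>
     (\<forall>t\<in>{0..1}. f t = f 0 + (LBINT s=0..t. g s))"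

definition H1_01 :: "(real \<Rightarrow> real) \<Rightarrow> bool" where
  "H1_01 f \<longleftrightarrow> (\<exists>g. is_weak_deriv01 f g)"

definition deriv01 :: "(real \<Rightarrow> real) \<Rightarrow> real \<Rightarrow> real" where
  "deriv01 f = (SOME g. is_weak_deriv01 f g)"

text \<open>Functions on the ladder are represented as functions on the plane; only
  their values on the ladder matter. Continuity at vertices is automatic.\<close>

definition L2sq :: "(real \<times> real \<Rightarrow> real) \<Rightarrow> real" where
  "L2sq v = (\<Sum>\<^sub>\<infinity>e. LBINT t=0..1. (v (edge_path e t))\<^sup>2)"

definition Lpp :: "real \<Rightarrow> (real \<times> real \<Rightarrow> real) \<Rightarrow> real" where
  "Lpp p v = (\<Sum>\<^sub>\<infinity>e. LBINT t=0..1. \<bar>v (edge_path e t)\<bar> powr p)"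

definition D2sq :: "(real \<times> real \<Rightarrow> real) \<Rightarrow> real" where
  "D2sq v = (\<Sum>\<^sub>\<infinity>e. LBINT t=0..1. (deriv01 (v \<circ> edge_path e) t)\<^sup>2)"

definition H1_ladder :: "(real \<times> real \<Rightarrow> real) \<Rightarrow> bool" where
  "H1_ladder v \<longleftrightarrow>
     (\<forall>e. H1_01 (v \<circ> edge_path e)) \<and>
     (\<lambda>e. LBINT t=0..1. (v (edge_path e t))\<^sup>2) summable_on UNIV \<and>
     (\<lambda>e. LBINT t=0..1. (deriv01 (v \<circ> edge_path e) t)\<^sup>2) summable_on UNIV"

definition J_action :: "real \<Rightarrow> real \<Rightarrow> (real \<times> real \<Rightarrow> real) \<Rightarrow> real" where
  "J_action p lam v = D2sq v / 2 + lam / 2 * L2sq v - Lpp p v / p"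

definition Nehari :: "real \<Rightarrow> real \<Rightarrow> (real \<times> real \<Rightarrow> real) set" where
  "Nehari p lam = {v. H1_ladder v \<and> (\<exists>x\<in>ladder. v x \<noteq> 0) \<and>
                     D2sq v + lam * L2sq v = Lpp p v}"

definition ground_level :: "real \<Rightarrow> real \<Rightarrow> real" where
  "ground_level p lam = (INF v\<in>Nehari p lam. J_action p lam v)"

end

(*
  On the Nehari manifold of exponent p the action is J = (1/2 - 1/p) Q with
  Q v = |v'|^2 + lam |v|^2, and every nonzero v has a multiple on the Nehari manifold of any
  other exponent q, with action (1/2 - 1/q) (Q v / |v|_q^q) powr (2/(q-2)) Q v.  Hence a bound
  beta Q v <= |v|_q^q for the almost minimisers v of exponent r yields
  J_q <= (1/2 - 1/q) / (1/2 - 1/r) beta powr (-2/(q-2)) J_r.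
  For q < r the uniform sup bound M of almost minimisers (H^1 embeds into L^infinity edgewise,
  uniformly along the ladder) gives beta = M powr (q - r); for q > r splitting |v| at the level
  delta = q - r gives beta = delta powr (q - r) (1 - delta powr (r - 2) / lam).  Both factors
  tend to 1 as q tends to r.
*)

theory Submission
  imports Defs "HOL-Real_Asymp.Real_Asymp"
begin

lemma abs_le_sq_plus_one: "\<bar>a::real\<bar> \<le> a\<^sup>2 + 1"
proof -
  have "0 \<le> (\<bar>a\<bar> - 1)\<^sup>2"
    by simp
  also have "\<dots> = a\<^sup>2 - 2 * \<bar>a\<bar> + 1"
    by (simp add: power2_eq_square algebra_simps)
  finally show ?thesis
    using abs_ge_zero[of a] by linarith
qed

lemma powr_abs_two: "\<bar>y::real\<bar> powr 2 = y\<^sup>2"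
  by (cases "y = 0") (simp_all add: powr_numeral)

lemma powr_ge_of_abs_le:
  fixes y :: real
  assumes "\<bar>y\<bar> \<le> M" "0 < q" "q \<le> r"
  shows "M powr (q - r) * \<bar>y\<bar> powr r \<le> \<bar>y\<bar> powr q"
proof (cases "y = 0")
  case False
  have "M powr (q - r) \<le> \<bar>y\<bar> powr (q - r)"
    using False assms by (intro powr_mono2') auto
  then have "M powr (q - r) * \<bar>y\<bar> powr r \<le> \<bar>y\<bar> powr (q - r) * \<bar>y\<bar> powr r"
    by (rule mult_right_mono) simp
  also have "\<dots> = \<bar>y\<bar> powr q"
    by (simp add: powr_add[symmetric])
  finally show ?thesis .
qed (use assms in simp)

lemma powr_le_powr_add_sq:
  fixes y :: real
  assumes \<delta>: "\<delta> > 0" and qr: "2 \<le> r" "r \<le> q"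
  shows "\<delta> powr (q - r) * \<bar>y\<bar> powr r \<le> \<bar>y\<bar> powr q + \<delta> powr (q - 2) * y\<^sup>2"
proof (cases "\<delta> \<le> \<bar>y\<bar>")
  case True
  have "\<delta> powr (q - r) \<le> \<bar>y\<bar> powr (q - r)"
    using True \<delta> qr by (intro powr_mono2) auto
  then have "\<delta> powr (q - r) * \<bar>y\<bar> powr r \<le> \<bar>y\<bar> powr (q - r) * \<bar>y\<bar> powr r"
    by (rule mult_right_mono) simp
  also have "\<dots> = \<bar>y\<bar> powr q"
    by (simp add: powr_add[symmetric])
  moreover have "0 \<le> \<delta> powr (q - 2) * y\<^sup>2"
    by simp
  ultimately show ?thesis
    by linarith
next
  case False
  have "\<bar>y\<bar> powr r = \<bar>y\<bar> powr (r - 2 + 2)"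
    by simp
  also have "\<dots> = \<bar>y\<bar> powr (r - 2) * \<bar>y\<bar> powr 2"
    by (rule powr_add)
  also have "\<dots> = \<bar>y\<bar> powr (r - 2) * y\<^sup>2"
    by (simp only: powr_abs_two)
  also have "\<dots> \<le> \<delta> powr (r - 2) * y\<^sup>2"
    using False qr by (intro mult_right_mono powr_mono2) auto
  finally have "\<delta> powr (q - r) * \<bar>y\<bar> powr r \<le> \<delta> powr (q - r) * (\<delta> powr (r - 2) * y\<^sup>2)"
    by (intro mult_left_mono) auto
  also have "\<dots> = \<delta> powr (q - 2) * y\<^sup>2"
    by (simp add: powr_add[symmetric])
  finally show ?thesis
    using powr_ge_zero[of "\<bar>y\<bar>" q] by linarith
qed

lemma powr_self_tendsto_1: "((\<lambda>x::real. x powr x) \<longlongrightarrow> 1) (at_right 0)"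
  by real_asymp

lemma summable_on_diff:
  fixes f g :: "'a \<Rightarrow> 'b::topological_ab_group_add"
  assumes "f summable_on A" "g summable_on A"
  shows "(\<lambda>x. f x - g x) summable_on A"
  using summable_on_add[OF assms(1) summable_on_uminus[THEN iffD2, OF assms(2)]] by simp

lemma infsum_diff:
  fixes f g :: "'a \<Rightarrow> 'b::{topological_ab_group_add, t2_space}"
  assumes "f summable_on A" "g summable_on A"
  shows "infsum (\<lambda>x. f x - g x) A = infsum f A - infsum g A"
  using infsum_add[OF assms(1) summable_on_uminus[THEN iffD2, OF assms(2)]] by (simp add: infsum_uminus)

lemma le_infsum_single:
  fixes f :: "'a \<Rightarrow> real"
  assumes "f summable_on UNIV" "\<And>x. f x \<ge> 0"
  shows "f a \<le> (\<Sum>\<^sub>\<infinity>x. f x)"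
  using infsum_mono2[OF _ assms(1), of "{a}"] assms(2) by simp

lemma le_mult_INF_if_near_minimizers:
  fixes f :: "'a \<Rightarrow> real"
  assumes S: "S \<noteq> {}" "bdd_below (f ` S)" and A: "A \<ge> 0" and B: "(INF x\<in>S. f x) < B"
    and near: "\<And>x. x \<in> S \<Longrightarrow> f x < B \<Longrightarrow> c \<le> A * f x"
  shows "c \<le> A * (INF x\<in>S. f x)"
proof (rule field_le_epsilon)
  fix \<epsilon> :: real assume \<epsilon>: "\<epsilon> > 0"
  define \<delta> where "\<delta> = min (\<epsilon> / (A + 1)) (B - (INF x\<in>S. f x))"
  have \<delta>: "\<delta> > 0"
    unfolding \<delta>_def using \<epsilon> A B by simp
  obtain x where x: "x \<in> S" "f x < (INF x\<in>S. f x) + \<delta>"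
    using cINF_less_iff[OF S] \<delta> by (metis less_add_same_cancel1)
  have "c \<le> A * f x"
    using x \<delta>_def by (intro near) auto
  also have "\<dots> \<le> A * ((INF x\<in>S. f x) + \<epsilon> / (A + 1))"
    using x(2) A by (intro mult_left_mono) (auto simp: \<delta>_def)
  also have "\<dots> = A * (INF x\<in>S. f x) + \<epsilon> * (A / (A + 1))"
    by (simp add: algebra_simps)
  also have "\<epsilon> * (A / (A + 1)) \<le> \<epsilon>"
    using A \<epsilon> by (intro mult_left_le) auto
  finally show "c \<le> A * (INF x\<in>S. f x) + \<epsilon>"
    by simp
qed

lemma tendsto_of_ratio_bounds:
  fixes G U R :: "'a \<Rightarrow> real"
  assumes upper: "eventually (\<lambda>x. G x \<le> U x * a) F" and lower: "eventually (\<lambda>x. a \<le> R x * G x) F"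
    and U: "(U \<longlongrightarrow> 1) F" and R: "(R \<longlongrightarrow> 1) F"
  shows "(G \<longlongrightarrow> a) F"
proof (rule tendsto_sandwich)
  show "eventually (\<lambda>x. a / R x \<le> G x) F"
    using lower order_tendstoD(1)[OF R zero_less_one]
    by eventually_elim (simp add: divide_le_eq mult.commute)
  show "((\<lambda>x. a / R x) \<longlongrightarrow> a) F"
    using tendsto_divide[OF tendsto_const R] by simp
  show "((\<lambda>x. U x * a) \<longlongrightarrow> a) F"
    using tendsto_mult[OF U tendsto_const] by simp
qed (rule upper)

lemma interval_integral_01_eq_integral:
  fixes h :: "real \<Rightarrow> real"
  assumes "continuous_on {0..1} h"
  shows "(LBINT t=0..1. h t) = integral {0..1} h"
  using interval_integral_eq_integral[of 0 1 h] borel_integrable_atLeastAtMost'[OF assms]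
  by (simp add: zero_ereal_def one_ereal_def)

lemma integral_01_pos:
  fixes h :: "real \<Rightarrow> real"
  assumes "continuous_on {0..1} h" "\<And>t. t \<in> {0..1} \<Longrightarrow> h t \<ge> 0" "t \<in> {0..1}" "h t > 0"
  shows "integral {0..1} h > 0"
  using integral_eq_0_iff[OF assms(1) _ assms(2)] assms(2-4)
    integral_nonneg[OF integrable_continuous_interval[OF assms(1)] assms(2)]
  by fastforce

lemma emeasure_density_eq_set_integral:
  fixes f :: "'a \<Rightarrow> real"
  assumes "integrable M f" "\<And>x. f x \<ge> 0" "A \<in> sets M"
  shows "emeasure (density M f) A = ennreal (set_lebesgue_integral M A f)"
  using assms by (simp add: emeasure_density nn_set_integral_eq_set_integral)

lemma AE_zero_if_integral_greaterThan_zero: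
  fixes k :: "real \<Rightarrow> real"
  assumes k: "integrable lborel k" and zero: "\<And>x. set_lebesgue_integral lborel {x<..} k = 0"
  shows "AE x in lborel. k x = 0"
proof -
  define kp where "kp x = max 0 (k x)" for x
  define kn where "kn x = max 0 (- k x)" for x
  have int: "integrable lborel kp" "integrable lborel kn"
    unfolding kp_def kn_def using k by auto
  have "set_lebesgue_integral lborel {x<..} kp = set_lebesgue_integral lborel {x<..} kn" for x
  proof -
    have "set_integrable lborel {x<..} kp" "set_integrable lborel {x<..} kn"
      using int unfolding set_integrable_def by (intro integrable_mult_indicator; simp)+
    then have "set_lebesgue_integral lborel {x<..} kp - set_lebesgue_integral lborel {x<..} kn
        = set_lebesgue_integral lborel {x<..} (\<lambda>y. kp y - kn y)"
      by (rule set_integral_diff(2)[symmetric])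
    also have "(\<lambda>y. kp y - kn y) = k"
      by (auto simp: kp_def kn_def max_def)
    finally show ?thesis using zero by simp
  qed
  moreover have "emeasure (density lborel kp) {x<..} = ennreal (set_lebesgue_integral lborel {x<..} kp)"
    and "emeasure (density lborel kn) {x<..} = ennreal (set_lebesgue_integral lborel {x<..} kn)" for x
    by (rule emeasure_density_eq_set_integral[OF int(1)] emeasure_density_eq_set_integral[OF int(2)];
        simp add: kp_def kn_def)+
  ultimately have "density lborel kp = density lborel kn"
    by (intro measure_eqI_lessThan) auto
  then have "AE x in lborel. ennreal (kp x) = ennreal (kn x)"
    using int by (intro sigma_finite_measure.density_unique[OF sigma_finite_lborel]) auto
  then show ?thesis
    by eventually_elim (auto simp: kp_def kn_def max_def split: if_splits)
qed

lemma integral_Int_greaterThan_eq_0: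
  fixes h :: "real \<Rightarrow> real"
  assumes hi: "h integrable_on {0..1}"
    and zero: "\<And>t. t \<in> {0..1} \<Longrightarrow> integral {0..t} h = 0"
  shows "integral ({0..1} \<inter> {x<..}) h = 0"
proof (cases "0 \<le> x \<and> x \<le> 1")
  case True
  have "integral {x<..1} h = integral {x..1} h"
    by (rule integral_spike_set; rule negligible_subset[of "{x}"]) auto
  also have "\<dots> = integral {0..1} h - integral {0..x} h"
    using True Henstock_Kurzweil_Integration.integral_combine[where a=0 and c=x and b=1 and f=h] hi by simp
  moreover have "{0..1} \<inter> {x<..} = {x<..1}"
    using True by auto
  ultimately show ?thesis
    using True zero[of 1] zero[of x] by simp
next
  case False
  then consider "x < 0" | "1 < x"
    by linarith
  then show ?thesis
  proof cases
    case 1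
    then have "{0..1} \<inter> {x<..} = {0..1}"
      by auto
    then show ?thesis
      using zero[of 1] by simp
  next
    case 2
    then have "{0..1} \<inter> {x<..} = {}"
      by auto
    then show ?thesis
      by simp
  qed
qed

lemma negligible_if_integrals_atLeastAtMost_zero:
  fixes h :: "real \<Rightarrow> real"
  assumes h: "set_integrable lborel {0..1} h"
    and zero: "\<And>t. t \<in> {0..1} \<Longrightarrow> integral {0..t} h = 0"
  shows "negligible {t \<in> {0..1}. h t \<noteq> 0}"
proof -
  define k where "k x = indicator {0..1} x * h x" for x
  have k: "integrable lborel k"
    using h unfolding k_def set_integrable_def by simp
  have hi: "h integrable_on {0..1}"
    using h set_borel_integral_eq_integral(1) by blast
  have "integral ({0..1} \<inter> {x<..}) h = 0" for x
    using hi zero by (rule integral_Int_greaterThan_eq_0)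
  moreover have "set_lebesgue_integral lborel {x<..} k = integral ({0..1} \<inter> {x<..}) h" for x
  proof -
    have "set_integrable lborel {x<..} k"
      using k unfolding set_integrable_def by (rule integrable_mult_indicator[rotated]) simp
    then have "set_lebesgue_integral lborel {x<..} k = integral {x<..} k"
      by (rule set_borel_integral_eq_integral(2))
    also have "\<dots> = integral {x<..} (\<lambda>y. if y \<in> {0..1} then h y else 0)"
      by (rule integral_cong) (simp add: k_def)
    also have "\<dots> = integral ({0..1} \<inter> {x<..}) h"
      by (rule integral_restrict_Int)
    finally show ?thesis .
  qed
  ultimately have "AE x in lborel. k x = 0"
    by (intro AE_zero_if_integral_greaterThan_zero k) simp
  then obtain N where N: "N \<in> null_sets lborel" "{x. k x \<noteq> 0} \<subseteq> N"
    unfolding eventually_ae_filter by auto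
  then have "negligible N"
    by (simp add: negligible_iff_null_sets null_sets_completionI)
  then show ?thesis
    by (rule negligible_subset) (use N(2) in \<open>auto simp: k_def\<close>)
qed

section \<open>Weak derivatives on the unit interval\<close>

lemma weak_deriv01D:
  assumes "is_weak_deriv01 f g"
  shows "set_integrable lborel {0..1} g" "set_integrable lborel {0..1} (\<lambda>t. (g t)\<^sup>2)"
    and "\<And>t. t \<in> {0..1} \<Longrightarrow> f t = f 0 + (LBINT s=0..t. g s)"
  using assms unfolding is_weak_deriv01_def by blast+

lemma weak_deriv01_integrable:
  assumes "is_weak_deriv01 f g"
  shows "g integrable_on {0..1}" "(\<lambda>t. (g t)\<^sup>2) integrable_on {0..1}"
  using weak_deriv01D(1,2)[OF assms] set_borel_integral_eq_integral(1) by blast+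

lemma weak_deriv01_eq_integral:
  assumes "is_weak_deriv01 f g" "t \<in> {0..1}"
  shows "f t = f 0 + integral {0..t} g"
proof -
  have "set_integrable lborel {0..t} g"
    using assms(2) by (intro set_integrable_subset[OF weak_deriv01D(1)[OF assms(1)]]) auto
  then have "(LBINT s=0..t. g s) = integral {0..t} g"
    using assms(2) interval_integral_eq_integral[of 0 t g] by (simp add: zero_ereal_def)
  then show ?thesis
    using weak_deriv01D(3)[OF assms] by simp
qed

lemma weak_deriv01_continuous:
  assumes "is_weak_deriv01 f g"
  shows "continuous_on {0..1} f"
proof -
  have "continuous_on {0..1} (\<lambda>t. f 0 + integral {0..t} g)"
    by (intro continuous_intros indefinite_integral_continuous_1 weak_deriv01_integrable[OF assms])
  then show ?thesis
    by (rule continuous_on_eq) (metis weak_deriv01_eq_integral[OF assms])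
qed

lemma weak_deriv01_LBINT_sq:
  assumes "is_weak_deriv01 f g"
  shows "(LBINT t=0..1. (g t)\<^sup>2) = integral {0..1} (\<lambda>t. (g t)\<^sup>2)"
  using weak_deriv01D(2)[OF assms] interval_integral_eq_integral[of 0 1 "\<lambda>t. (g t)\<^sup>2"]
  by (simp add: zero_ereal_def one_ereal_def)

lemma weak_deriv01_cmult:
  assumes "is_weak_deriv01 f g"
  shows "is_weak_deriv01 (\<lambda>t. c * f t) (\<lambda>t. c * g t)"
proof -
  note g = weak_deriv01D(1,2)[OF assms] and f = weak_deriv01D(3)[OF assms]
  have "set_integrable lborel {0..1} (\<lambda>t. c\<^sup>2 * (g t)\<^sup>2)"
    using g(2) by (rule set_integrable_mult_right)
  moreover have "c * f t = c * f 0 + (LBINT s=0..t. c * g s)" if "t \<in> {0..1}" for t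
    using f[OF that] by (simp add: algebra_simps)
  moreover have "set_integrable lborel {0..1} (\<lambda>t. c * g t)"
    using g(1) by (rule set_integrable_mult_right)
  ultimately show ?thesis
    unfolding is_weak_deriv01_def power_mult_distrib by blast
qed

lemma weak_deriv01_zero:
  assumes "\<And>t. t \<in> {0..1} \<Longrightarrow> f t = 0"
  shows "is_weak_deriv01 f (\<lambda>_. 0)"
  using assms unfolding is_weak_deriv01_def set_integrable_def by auto

lemma is_weak_deriv01_deriv01:
  assumes "H1_01 f"
  shows "is_weak_deriv01 f (deriv01 f)"
  using assms unfolding H1_01_def deriv01_def by (rule someI_ex)

lemma weak_deriv01_unique:
  assumes g1: "is_weak_deriv01 f g1" and g2: "is_weak_deriv01 f g2"
  shows "negligible {t \<in> {0..1}. g1 t \<noteq> g2 t}"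
proof -
  have "integral {0..t} (\<lambda>s. g1 s - g2 s) = 0" if t: "t \<in> {0..1}" for t
  proof -
    have "g1 integrable_on {0..t}" "g2 integrable_on {0..t}"
      using weak_deriv01_integrable(1)[OF g1] weak_deriv01_integrable(1)[OF g2] t
      by (auto intro: integrable_on_subinterval)
    then show ?thesis
      using weak_deriv01_eq_integral[OF g1 t] weak_deriv01_eq_integral[OF g2 t]
      by (simp add: integral_diff)
  qed
  moreover have "set_integrable lborel {0..1} (\<lambda>s. g1 s - g2 s)"
    using weak_deriv01D(1)[OF g1] weak_deriv01D(1)[OF g2] by (rule set_integral_diff(1))
  ultimately have "negligible {t \<in> {0..1}. g1 t - g2 t \<noteq> 0}"
    by (intro negligible_if_integrals_atLeastAtMost_zero)
  then show ?thesis
    by simp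
qed

lemma weak_deriv01_integral_sq_unique:
  assumes "is_weak_deriv01 f g1" "is_weak_deriv01 f g2"
  shows "integral {0..1} (\<lambda>t. (g1 t)\<^sup>2) = integral {0..1} (\<lambda>t. (g2 t)\<^sup>2)"
  by (rule integral_spike[OF weak_deriv01_unique[OF assms]]) auto

lemma weak_deriv01_abs_integral_le:
  assumes w: "is_weak_deriv01 f g" and s: "s \<in> {0..1}"
  shows "\<bar>integral {0..s} g\<bar> \<le> integral {0..1} (\<lambda>x. (g x)\<^sup>2) + 1"
proof -
  define \<phi> where "\<phi> x = (g x)\<^sup>2 + 1" for x
  have gi: "g integrable_on {0..1}" and g2i: "(\<lambda>x. (g x)\<^sup>2) integrable_on {0..1}"
    using weak_deriv01_integrable[OF w] by auto
  have \<phi>i: "\<phi> integrable_on {0..1}"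
    unfolding \<phi>_def by (intro integrable_add g2i integrable_const_ivl)
  have sub: "{0..s} \<subseteq> {0..1}"
    using s by auto
  have "norm (integral {0..s} g) \<le> integral {0..s} \<phi>"
    by (rule integral_norm_bound_integral[OF integrable_on_subinterval[OF gi sub]
          integrable_on_subinterval[OF \<phi>i sub]])
      (simp add: \<phi>_def abs_le_sq_plus_one)
  also have "\<dots> \<le> integral {0..1} \<phi>"
    using integral_subset_le[OF sub integrable_on_subinterval[OF \<phi>i sub] \<phi>i] by (simp add: \<phi>_def)
  also have "\<dots> = integral {0..1} (\<lambda>x. (g x)\<^sup>2) + 1"
    unfolding \<phi>_def using integral_add[OF g2i integrable_const_ivl, of 1] by simp
  finally show ?thesis
    by simp
qed

lemma weak_deriv01_abs_le:
  assumes w: "is_weak_deriv01 f g" and t: "t \<in> {0..1}"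
  shows "\<bar>f t\<bar> \<le> 3 + integral {0..1} (\<lambda>s. (f s)\<^sup>2) + 2 * integral {0..1} (\<lambda>s. (g s)\<^sup>2)"
proof -
  define Dg where "Dg = integral {0..1} (\<lambda>x. (g x)\<^sup>2)"
  have diff: "\<bar>f t\<bar> \<le> (f s)\<^sup>2 + (3 + 2 * Dg)" if s: "s \<in> {0..1}" for s
  proof -
    have "f t - f s = integral {0..t} g - integral {0..s} g"
      using weak_deriv01_eq_integral[OF w t] weak_deriv01_eq_integral[OF w s] by simp
    then have "\<bar>f t\<bar> \<le> \<bar>f s\<bar> + \<bar>integral {0..t} g\<bar> + \<bar>integral {0..s} g\<bar>"
      by linarith
    then show ?thesis
      using weak_deriv01_abs_integral_le[OF w s] weak_deriv01_abs_integral_le[OF w t]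
        abs_le_sq_plus_one[of "f s"]
      unfolding Dg_def by linarith
  qed
  have f2i: "(\<lambda>s. (f s)\<^sup>2) integrable_on {0..1}"
    by (intro integrable_continuous_interval continuous_intros weak_deriv01_continuous[OF w])
  have "\<bar>f t\<bar> = integral {0..1} (\<lambda>s::real. \<bar>f t\<bar>)"
    by simp
  also have "\<dots> \<le> integral {0..1} (\<lambda>s. (f s)\<^sup>2 + (3 + 2 * Dg))"
    by (rule integral_le[OF integrable_const_ivl integrable_add[OF f2i integrable_const_ivl] diff])
  also have "\<dots> = integral {0..1} (\<lambda>s. (f s)\<^sup>2) + (3 + 2 * Dg)"
    using integral_add[OF f2i integrable_const_ivl] by simp
  finally show ?thesis
    unfolding Dg_def by simp
qed

section \<open>Functions on the ladder\<close>

definition edge_L2sq :: "(real \<times> real \<Rightarrow> real) \<Rightarrow> ladder_edge \<Rightarrow> real" where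
  "edge_L2sq v e = (LBINT t=0..1. (v (edge_path e t))\<^sup>2)"

definition edge_D2sq :: "(real \<times> real \<Rightarrow> real) \<Rightarrow> ladder_edge \<Rightarrow> real" where
  "edge_D2sq v e = (LBINT t=0..1. (deriv01 (v \<circ> edge_path e) t)\<^sup>2)"

definition edge_Lpp :: "real \<Rightarrow> (real \<times> real \<Rightarrow> real) \<Rightarrow> ladder_edge \<Rightarrow> real" where
  "edge_Lpp p v e = (LBINT t=0..1. \<bar>v (edge_path e t)\<bar> powr p)"

lemma L2sq_eq_infsum: "L2sq v = (\<Sum>\<^sub>\<infinity>e. edge_L2sq v e)"
  unfolding L2sq_def edge_L2sq_def ..

lemma D2sq_eq_infsum: "D2sq v = (\<Sum>\<^sub>\<infinity>e. edge_D2sq v e)"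
  unfolding D2sq_def edge_D2sq_def ..

lemma Lpp_eq_infsum: "Lpp p v = (\<Sum>\<^sub>\<infinity>e. edge_Lpp p v e)"
  unfolding Lpp_def edge_Lpp_def ..

lemma H1_ladder_summable:
  assumes "H1_ladder v"
  shows "edge_L2sq v summable_on UNIV" "edge_D2sq v summable_on UNIV"
  using assms unfolding H1_ladder_def edge_L2sq_def edge_D2sq_def by auto

lemma H1_ladder_weak_deriv:
  assumes "H1_ladder v"
  shows "is_weak_deriv01 (v \<circ> edge_path e) (deriv01 (v \<circ> edge_path e))"
  using assms unfolding H1_ladder_def by (blast intro: is_weak_deriv01_deriv01)

lemma H1_ladder_continuous_on_edge:
  assumes "H1_ladder v"
  shows "continuous_on {0..1} (\<lambda>t. v (edge_path e t))"
  using weak_deriv01_continuous[OF H1_ladder_weak_deriv[OF assms]] by (simp add: o_def)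

lemma H1_ladder_continuous_on_edge_powr:
  assumes "H1_ladder v" "p > 0"
  shows "continuous_on {0..1} (\<lambda>t. \<bar>v (edge_path e t)\<bar> powr p)"
  using assms by (intro continuous_on_powr' continuous_intros H1_ladder_continuous_on_edge) auto

lemma H1_ladder_edge_integrable:
  assumes "H1_ladder v"
  shows "(\<lambda>t. (v (edge_path e t))\<^sup>2) integrable_on {0..1}"
    and "p > 0 \<Longrightarrow> (\<lambda>t. \<bar>v (edge_path e t)\<bar> powr p) integrable_on {0..1}"
  by (intro integrable_continuous_interval continuous_intros H1_ladder_continuous_on_edge
      H1_ladder_continuous_on_edge_powr assms; assumption?)+

lemma edge_L2sq_eq_integral:
  assumes "H1_ladder v"
  shows "edge_L2sq v e = integral {0..1} (\<lambda>t. (v (edge_path e t))\<^sup>2)"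
  unfolding edge_L2sq_def
  by (intro interval_integral_01_eq_integral continuous_intros H1_ladder_continuous_on_edge assms)

lemma edge_D2sq_eq_integral:
  assumes "H1_ladder v"
  shows "edge_D2sq v e = integral {0..1} (\<lambda>t. (deriv01 (v \<circ> edge_path e) t)\<^sup>2)"
  unfolding edge_D2sq_def by (rule weak_deriv01_LBINT_sq[OF H1_ladder_weak_deriv[OF assms]])

lemma edge_Lpp_eq_integral:
  assumes "H1_ladder v" "p > 0"
  shows "edge_Lpp p v e = integral {0..1} (\<lambda>t. \<bar>v (edge_path e t)\<bar> powr p)"
  unfolding edge_Lpp_def
  by (intro interval_integral_01_eq_integral H1_ladder_continuous_on_edge_powr assms)

lemma edge_L2sq_nonneg:
  assumes "H1_ladder v"
  shows "edge_L2sq v e \<ge> 0"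
  unfolding edge_L2sq_eq_integral[OF assms]
  by (intro integral_nonneg integrable_continuous_interval continuous_intros
      H1_ladder_continuous_on_edge assms) auto

lemma edge_D2sq_nonneg:
  assumes "H1_ladder v"
  shows "edge_D2sq v e \<ge> 0"
  unfolding edge_D2sq_eq_integral[OF assms]
  using weak_deriv01_integrable(2)[OF H1_ladder_weak_deriv[OF assms]] by (intro integral_nonneg) auto

lemma edge_Lpp_nonneg:
  assumes "H1_ladder v" "p > 0"
  shows "edge_Lpp p v e \<ge> 0"
  unfolding edge_Lpp_eq_integral[OF assms]
  by (intro integral_nonneg integrable_continuous_interval H1_ladder_continuous_on_edge_powr assms) auto

lemma L2sq_nonneg: "H1_ladder v \<Longrightarrow> L2sq v \<ge> 0"
  unfolding L2sq_eq_infsum by (intro infsum_nonneg edge_L2sq_nonneg)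

lemma D2sq_nonneg: "H1_ladder v \<Longrightarrow> D2sq v \<ge> 0"
  unfolding D2sq_eq_infsum by (intro infsum_nonneg edge_D2sq_nonneg)

lemma H1_ladder_abs_le:
  assumes v: "H1_ladder v" and t: "t \<in> {0..1}"
  shows "\<bar>v (edge_path e t)\<bar> \<le> 3 + 2 * (D2sq v + L2sq v)"
proof -
  have "\<bar>(v \<circ> edge_path e) t\<bar> \<le> 3 + integral {0..1} (\<lambda>s. ((v \<circ> edge_path e) s)\<^sup>2)
      + 2 * integral {0..1} (\<lambda>s. (deriv01 (v \<circ> edge_path e) s)\<^sup>2)"
    by (rule weak_deriv01_abs_le[OF H1_ladder_weak_deriv[OF v] t])
  also have "\<dots> = 3 + edge_L2sq v e + 2 * edge_D2sq v e"
    by (simp add: edge_L2sq_eq_integral[OF v] edge_D2sq_eq_integral[OF v] o_def)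
  also have "\<dots> \<le> 3 + L2sq v + 2 * D2sq v"
    using le_infsum_single[OF H1_ladder_summable(1)[OF v] edge_L2sq_nonneg[OF v], of e]
      le_infsum_single[OF H1_ladder_summable(2)[OF v] edge_D2sq_nonneg[OF v], of e]
    unfolding L2sq_eq_infsum D2sq_eq_infsum by linarith
  also have "\<dots> \<le> 3 + 2 * (D2sq v + L2sq v)"
    using L2sq_nonneg[OF v] by simp
  finally show ?thesis
    by simp
qed

lemma infsum_edge_integral_pos:
  fixes \<phi> :: "real \<Rightarrow> real"
  assumes v: "H1_ladder v" and x: "x \<in> ladder" "v x \<noteq> 0"
    and \<phi>: "continuous_on UNIV \<phi>" "\<And>y. \<phi> y \<ge> 0" "\<And>y. y \<noteq> 0 \<Longrightarrow> \<phi> y > 0"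
    and f: "\<And>e. f e = integral {0..1} (\<lambda>t. \<phi> (v (edge_path e t)))" "f summable_on UNIV"
  shows "(\<Sum>\<^sub>\<infinity>e. f e) > 0"
proof -
  obtain e t where t: "t \<in> {0..1}" and xt: "x = edge_path e t"
    using x(1) unfolding ladder_def by blast
  have cont: "continuous_on {0..1} (\<lambda>t. \<phi> (v (edge_path e t)))" for e
    by (rule continuous_on_compose2[OF \<phi>(1) H1_ladder_continuous_on_edge[OF v]]) auto
  have "0 < f e"
    unfolding f(1) using integral_01_pos[OF cont \<phi>(2) t] \<phi>(3) x(2) xt by blast
  also have "\<dots> \<le> (\<Sum>\<^sub>\<infinity>e. f e)"
    using f(2) by (rule le_infsum_single)
      (simp add: f(1) integral_nonneg integrable_continuous_interval cont \<phi>(2))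
  finally show ?thesis .
qed

lemma H1_ladder_cmult_edge:
  assumes "H1_ladder v"
  shows "is_weak_deriv01 ((\<lambda>x. c * v x) \<circ> edge_path e) (\<lambda>t. c * deriv01 (v \<circ> edge_path e) t)"
  using weak_deriv01_cmult[OF H1_ladder_weak_deriv[OF assms]] by (simp add: o_def)

lemma edge_D2sq_cmult:
  assumes v: "H1_ladder v"
  shows "edge_D2sq (\<lambda>x. c * v x) e = c\<^sup>2 * edge_D2sq v e"
proof -
  let ?w = "(\<lambda>x. c * v x) \<circ> edge_path e"
  have w: "is_weak_deriv01 ?w (\<lambda>t. c * deriv01 (v \<circ> edge_path e) t)"
    by (rule H1_ladder_cmult_edge[OF v])
  then have "H1_01 ?w"
    unfolding H1_01_def by blast
  then have w': "is_weak_deriv01 ?w (deriv01 ?w)"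
    by (rule is_weak_deriv01_deriv01)
  have "edge_D2sq (\<lambda>x. c * v x) e = integral {0..1} (\<lambda>t. (deriv01 ?w t)\<^sup>2)"
    unfolding edge_D2sq_def by (rule weak_deriv01_LBINT_sq[OF w'])
  also have "\<dots> = integral {0..1} (\<lambda>t. (c * deriv01 (v \<circ> edge_path e) t)\<^sup>2)"
    by (rule weak_deriv01_integral_sq_unique[OF w' w])
  also have "\<dots> = c\<^sup>2 * edge_D2sq v e"
    by (simp add: power_mult_distrib edge_D2sq_eq_integral[OF v])
  finally show ?thesis .
qed

lemma edge_L2sq_cmult: "edge_L2sq (\<lambda>x. c * v x) e = c\<^sup>2 * edge_L2sq v e"
  unfolding edge_L2sq_def by (simp add: power_mult_distrib)

lemma edge_Lpp_cmult: "edge_Lpp p (\<lambda>x. c * v x) e = \<bar>c\<bar> powr p * edge_Lpp p v e"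
  unfolding edge_Lpp_def by (simp add: abs_mult powr_mult)

lemma H1_ladder_cmult:
  assumes v: "H1_ladder v"
  shows "H1_ladder (\<lambda>x. c * v x)"
proof -
  have "H1_01 ((\<lambda>x. c * v x) \<circ> edge_path e)" for e
    using H1_ladder_cmult_edge[OF v] unfolding H1_01_def by blast
  moreover have "edge_L2sq (\<lambda>x. c * v x) summable_on UNIV"
    unfolding edge_L2sq_cmult by (intro summable_on_cmult_right H1_ladder_summable[OF v])
  moreover have "edge_D2sq (\<lambda>x. c * v x) summable_on UNIV"
    unfolding edge_D2sq_cmult[OF v] by (intro summable_on_cmult_right H1_ladder_summable[OF v])
  ultimately show ?thesis
    unfolding H1_ladder_def edge_L2sq_def edge_D2sq_def by blast
qed

lemma L2sq_cmult: "L2sq (\<lambda>x. c * v x) = c\<^sup>2 * L2sq v"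
  unfolding L2sq_eq_infsum edge_L2sq_cmult by (rule infsum_cmult_right')

lemma D2sq_cmult:
  assumes "H1_ladder v"
  shows "D2sq (\<lambda>x. c * v x) = c\<^sup>2 * D2sq v"
  unfolding D2sq_eq_infsum edge_D2sq_cmult[OF assms] by (rule infsum_cmult_right')

lemma Lpp_cmult: "Lpp p (\<lambda>x. c * v x) = \<bar>c\<bar> powr p * Lpp p v"
  unfolding Lpp_eq_infsum edge_Lpp_cmult by (rule infsum_cmult_right')

lemma edge_Lpp_summable:
  assumes v: "H1_ladder v" and q: "q \<ge> 2"
  shows "edge_Lpp q v summable_on UNIV"
proof -
  define M where "M = 3 + 2 * (D2sq v + L2sq v)"
  have M: "M > 0"
    unfolding M_def using D2sq_nonneg[OF v] L2sq_nonneg[OF v] by simp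
  have "edge_Lpp q v e \<le> M powr (q - 2) * edge_L2sq v e" for e
  proof -
    have "\<bar>v (edge_path e t)\<bar> powr q \<le> M powr (q - 2) * (v (edge_path e t))\<^sup>2" if "t \<in> {0..1}" for t
      using powr_ge_of_abs_le[OF H1_ladder_abs_le[OF v that, folded M_def], of 2 q] q M
      by (simp add: powr_abs_two powr_diff field_simps)
    then have "integral {0..1} (\<lambda>t. \<bar>v (edge_path e t)\<bar> powr q)
        \<le> integral {0..1} (\<lambda>t. M powr (q - 2) * (v (edge_path e t))\<^sup>2)"
      using q by (intro integral_le integrable_on_mult_right H1_ladder_edge_integrable[OF v]) auto
    then show ?thesis
      using q by (simp add: edge_Lpp_eq_integral[OF v] edge_L2sq_eq_integral[OF v])
  qed
  then show ?thesis
    using q by (intro summable_on_comparison_test[OF summable_on_cmult_right[OF H1_ladder_summable(1)[OF v]]])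
      (auto intro: edge_Lpp_nonneg[OF v])
qed

lemma Lpp_ge_of_pointwise:
  assumes v: "H1_ladder v" and q: "q \<ge> 2" and r: "r \<ge> 2"
    and M: "\<And>e t. t \<in> {0..1} \<Longrightarrow> \<bar>v (edge_path e t)\<bar> \<le> M"
    and pw: "\<And>y. \<bar>y\<bar> \<le> M \<Longrightarrow> \<alpha> * \<bar>y\<bar> powr r - \<beta> * y\<^sup>2 \<le> \<bar>y\<bar> powr q"
  shows "\<alpha> * Lpp r v - \<beta> * L2sq v \<le> Lpp q v"
proof -
  have "\<alpha> * edge_Lpp r v e - \<beta> * edge_L2sq v e \<le> edge_Lpp q v e" for e
  proof -
    have "\<alpha> * edge_Lpp r v e - \<beta> * edge_L2sq v e
        = integral {0..1} (\<lambda>t. \<alpha> * \<bar>v (edge_path e t)\<bar> powr r - \<beta> * (v (edge_path e t))\<^sup>2)"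
      using r by (simp add: edge_Lpp_eq_integral[OF v] edge_L2sq_eq_integral[OF v] integral_diff
          integral_mult_right integrable_on_mult_right H1_ladder_edge_integrable[OF v])
    also have "\<dots> \<le> integral {0..1} (\<lambda>t. \<bar>v (edge_path e t)\<bar> powr q)"
      using q r M pw by (intro integral_le integrable_diff integrable_on_mult_right
          H1_ladder_edge_integrable[OF v]) auto
    finally show ?thesis
      using q by (simp add: edge_Lpp_eq_integral[OF v])
  qed
  then have "(\<Sum>\<^sub>\<infinity>e. \<alpha> * edge_Lpp r v e - \<beta> * edge_L2sq v e) \<le> (\<Sum>\<^sub>\<infinity>e. edge_Lpp q v e)"
    by (intro infsum_mono summable_on_diff summable_on_cmult_right edge_Lpp_summable
        H1_ladder_summable v q r)
  also have "(\<Sum>\<^sub>\<infinity>e. \<alpha> * edge_Lpp r v e - \<beta> * edge_L2sq v e) = \<alpha> * Lpp r v - \<beta> * L2sq v"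
    unfolding Lpp_eq_infsum L2sq_eq_infsum
    by (simp add: infsum_diff infsum_cmult_right' summable_on_cmult_right edge_Lpp_summable
        H1_ladder_summable v r)
  finally show ?thesis
    unfolding Lpp_eq_infsum .
qed

lemma L2sq_pos:
  assumes v: "H1_ladder v" and x: "x \<in> ladder" "v x \<noteq> 0"
  shows "L2sq v > 0"
  unfolding L2sq_eq_infsum
  by (rule infsum_edge_integral_pos[OF v x _ _ _ edge_L2sq_eq_integral[OF v] H1_ladder_summable(1)[OF v]])
    (auto intro: continuous_intros)

lemma Lpp_pos:
  assumes v: "H1_ladder v" and x: "x \<in> ladder" "v x \<noteq> 0" and q: "q \<ge> 2"
  shows "Lpp q v > 0"
proof -
  have "continuous_on UNIV (\<lambda>y::real. \<bar>y\<bar> powr q)"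
    using q by (intro continuous_on_powr' continuous_intros) auto
  then show ?thesis
    unfolding Lpp_eq_infsum using q
    by (intro infsum_edge_integral_pos[OF v x _ _ _ edge_Lpp_eq_integral[OF v] edge_Lpp_summable[OF v q]])
      auto
qed

section \<open>The Nehari manifold and the ground level\<close>

definition quad_form :: "real \<Rightarrow> (real \<times> real \<Rightarrow> real) \<Rightarrow> real" where
  "quad_form lam v = D2sq v + lam * L2sq v"

lemma quad_form_cmult: "H1_ladder v \<Longrightarrow> quad_form lam (\<lambda>x. c * v x) = c\<^sup>2 * quad_form lam v"
  unfolding quad_form_def by (simp add: D2sq_cmult L2sq_cmult algebra_simps)

lemma quad_form_ge:
  assumes v: "H1_ladder v" and lam: "lam > 0"
  shows "lam * L2sq v \<le> quad_form lam v" "min 1 lam * (D2sq v + L2sq v) \<le> quad_form lam v"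
proof -
  show "lam * L2sq v \<le> quad_form lam v"
    unfolding quad_form_def using D2sq_nonneg[OF v] by simp
  have "min 1 lam * D2sq v \<le> 1 * D2sq v" "min 1 lam * L2sq v \<le> lam * L2sq v"
    using D2sq_nonneg[OF v] L2sq_nonneg[OF v] by (intro mult_right_mono; simp)+
  then show "min 1 lam * (D2sq v + L2sq v) \<le> quad_form lam v"
    unfolding quad_form_def by (simp add: distrib_left)
qed

lemma quad_form_pos:
  assumes v: "H1_ladder v" and x: "x \<in> ladder" "v x \<noteq> 0" and lam: "lam > 0"
  shows "quad_form lam v > 0"
proof -
  have "0 < lam * L2sq v"
    using L2sq_pos[OF v x] lam by simp
  then show ?thesis
    using quad_form_ge(1)[OF v lam] by linarith
qed

lemma Nehari_D:
  assumes "v \<in> Nehari p lam"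
  shows "H1_ladder v" "\<exists>x\<in>ladder. v x \<noteq> 0" "Lpp p v = quad_form lam v"
    and "J_action p lam v = (1/2 - 1/p) * quad_form lam v"
  using assms unfolding Nehari_def J_action_def quad_form_def by (auto simp: algebra_simps)

lemma Nehari_multiple:
  assumes v: "H1_ladder v" and x: "x \<in> ladder" "v x \<noteq> 0" and q: "q > 2" and lam: "lam > 0"
  obtains w where "w \<in> Nehari q lam"
    "J_action q lam w = (1/2 - 1/q) * (quad_form lam v / Lpp q v) powr (2 / (q - 2)) * quad_form lam v"
proof -
  define \<rho> where "\<rho> = quad_form lam v / Lpp q v"
  define t where "t = \<rho> powr (1 / (q - 2))"
  have Lq: "Lpp q v > 0"
    using Lpp_pos[OF v x] q by simp
  have \<rho>: "\<rho> > 0"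
    unfolding \<rho>_def using Lq quad_form_pos[OF v x lam] by simp
  then have t: "t > 0"
    unfolding t_def by simp
  have t2: "t\<^sup>2 = \<rho> powr (2 / (q - 2))"
    using t unfolding t_def by (simp add: powr_numeral[symmetric] powr_powr)
  have tq: "t powr q = \<rho> * t\<^sup>2"
  proof -
    have "t powr q = t powr (q - 2) * t powr 2"
      by (simp add: powr_add[symmetric])
    also have "t powr (q - 2) = \<rho>"
      unfolding t_def using \<rho> q by (simp add: powr_powr)
    finally show ?thesis
      using t by (simp add: powr_numeral)
  qed
  define w where "w = (\<lambda>x. t * v x)"
  have Q: "quad_form lam w = t\<^sup>2 * quad_form lam v"
    unfolding w_def by (rule quad_form_cmult[OF v])
  have L: "Lpp q w = t\<^sup>2 * quad_form lam v"
    unfolding w_def Lpp_cmult using t tq Lq by (simp add: \<rho>_def)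
  have "H1_ladder w" "w x \<noteq> 0"
    unfolding w_def using H1_ladder_cmult[OF v] x t by auto
  then have "w \<in> Nehari q lam"
    unfolding Nehari_def using x(1) Q L by (auto simp: quad_form_def)
  moreover have "J_action q lam w = (1/2 - 1/q) * \<rho> powr (2 / (q - 2)) * quad_form lam v"
    using Nehari_D(4)[OF \<open>w \<in> Nehari q lam\<close>] Q t2 by simp
  ultimately show ?thesis
    using that unfolding \<rho>_def by blast
qed

definition rung_bump :: "real \<times> real \<Rightarrow> real" where
  "rung_bump = (\<lambda>(x, y). if x = 0 then y * (1 - y) else 0)"

lemma rung_bump_off_rung0:
  assumes "e \<noteq> Rung 0"
  shows "rung_bump (edge_path e t) = 0"
  using assms by (cases e) (auto simp: rung_bump_def)

lemma rung_bump_rung0: "is_weak_deriv01 (rung_bump \<circ> edge_path (Rung 0)) (\<lambda>t. 1 - 2 * t)"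
proof -
  have "(LBINT s=0..t. 1 - 2 * s) = t * (1 - t)" if "t \<in> {0..1}" for t :: real
  proof -
    have "(LBINT s=ereal 0..ereal t. 1 - 2 * s) = t * (1 - t) - 0 * (1 - 0)"
      by (intro interval_integral_FTC_finite continuous_intros)
         (auto intro!: derivative_eq_intros simp: algebra_simps)
    then show ?thesis by (simp add: zero_ereal_def)
  qed
  then show ?thesis
    unfolding is_weak_deriv01_def
    by (auto intro!: borel_integrable_atLeastAtMost' continuous_intros simp: rung_bump_def)
qed

lemma H1_ladder_rung_bump: "H1_ladder rung_bump"
proof -
  have zero: "is_weak_deriv01 (rung_bump \<circ> edge_path e) (\<lambda>_. 0)" if "e \<noteq> Rung 0" for e
    using rung_bump_off_rung0[OF that] by (intro weak_deriv01_zero) simp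
  have H1: "H1_01 (rung_bump \<circ> edge_path e)" for e
    using zero rung_bump_rung0 unfolding H1_01_def by (cases "e = Rung 0") auto
  have "edge_L2sq rung_bump e = 0" if "e \<noteq> Rung 0" for e
    unfolding edge_L2sq_def using rung_bump_off_rung0[OF that] by simp
  moreover have "edge_D2sq rung_bump e = 0" if "e \<noteq> Rung 0" for e
  proof -
    have "edge_D2sq rung_bump e = integral {0..1} (\<lambda>t. (deriv01 (rung_bump \<circ> edge_path e) t)\<^sup>2)"
      unfolding edge_D2sq_def by (rule weak_deriv01_LBINT_sq[OF is_weak_deriv01_deriv01[OF H1]])
    also have "\<dots> = 0"
      using weak_deriv01_integral_sq_unique[OF is_weak_deriv01_deriv01[OF H1] zero[OF that]] by simp
    finally show ?thesis .
  qed
  moreover have "f summable_on UNIV" if "\<And>e. e \<noteq> Rung 0 \<Longrightarrow> f e = 0" for f :: "ladder_edge \<Rightarrow> real"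
    using summable_on_cong_neutral[of UNIV "{Rung 0}" f f] that by simp
  ultimately have "edge_L2sq rung_bump summable_on UNIV" "edge_D2sq rung_bump summable_on UNIV"
    by blast+
  then show ?thesis
    unfolding H1_ladder_def edge_L2sq_def edge_D2sq_def using H1 by blast
qed

lemma rung_bump_nonzero: "(0, 1/2) \<in> ladder" "rung_bump (0, 1/2) \<noteq> 0"
proof -
  have "(0, 1/2) \<in> edge_path (Rung 0) ` {0..1}"
    by (rule image_eqI[of _ _ "1/2"]) simp_all
  then show "(0, 1/2) \<in> ladder"
    unfolding ladder_def by blast
qed (simp add: rung_bump_def)

lemma Nehari_nonempty: "q > 2 \<Longrightarrow> lam > 0 \<Longrightarrow> Nehari q lam \<noteq> {}"
  using Nehari_multiple[OF H1_ladder_rung_bump rung_bump_nonzero] by blast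

lemma J_action_Nehari_nonneg:
  assumes "v \<in> Nehari p lam" "lam > 0" "p > 2"
  shows "J_action p lam v \<ge> 0"
proof -
  have "1/2 - 1/p > 0"
    using assms(3) by (simp add: field_simps)
  then show ?thesis
    using Nehari_D(4)[OF assms(1)] quad_form_pos[OF Nehari_D(1)[OF assms(1)] _ _ assms(2)]
      Nehari_D(2)[OF assms(1)] by fastforce
qed

lemma bdd_below_J_action_Nehari:
  "lam > 0 \<Longrightarrow> p > 2 \<Longrightarrow> bdd_below (J_action p lam ` Nehari p lam)"
  by (rule bdd_belowI[of _ 0]) (auto intro: J_action_Nehari_nonneg)

lemma ground_level_le:
  "lam > 0 \<Longrightarrow> p > 2 \<Longrightarrow> v \<in> Nehari p lam \<Longrightarrow> ground_level p lam \<le> J_action p lam v"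
  unfolding ground_level_def by (rule cINF_lower[OF bdd_below_J_action_Nehari])

lemma ground_level_nonneg: "lam > 0 \<Longrightarrow> p > 2 \<Longrightarrow> ground_level p lam \<ge> 0"
  unfolding ground_level_def
  by (rule cINF_greatest[OF Nehari_nonempty]) (auto intro: J_action_Nehari_nonneg)

text \<open>Proved by mapping the almost minimisers for r to their Nehari multiples for q.\<close>
lemma ground_level_le_of_Lpp_ge:
  assumes lam: "lam > 0" and q: "q > 2" and r: "r > 2" and \<beta>: "\<beta> > 0"
    and B: "ground_level r lam < B"
    and Lpp: "\<And>v. v \<in> Nehari r lam \<Longrightarrow> J_action r lam v < B \<Longrightarrow> \<beta> * quad_form lam v \<le> Lpp q v"
  shows "ground_level q lam \<le> (1/2 - 1/q) / (1/2 - 1/r) * \<beta> powr (- 2 / (q - 2)) * ground_level r lam"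
proof -
  have cq: "1/2 - 1/q > 0" and cr: "1/2 - 1/r > 0"
    using q r by (simp_all add: field_simps)
  have "ground_level q lam \<le> (1/2 - 1/q) / (1/2 - 1/r) * \<beta> powr (- 2 / (q - 2)) * J_action r lam v"
    if v: "v \<in> Nehari r lam" "J_action r lam v < B" for v
  proof -
    note vD = Nehari_D[OF v(1)]
    obtain x where x: "x \<in> ladder" "v x \<noteq> 0"
      using vD(2) by blast
    have Q: "quad_form lam v > 0"
      by (rule quad_form_pos[OF vD(1) x lam])
    obtain w where w: "w \<in> Nehari q lam"
      "J_action q lam w = (1/2 - 1/q) * (quad_form lam v / Lpp q v) powr (2 / (q - 2)) * quad_form lam v"
      by (rule Nehari_multiple[OF vD(1) x q lam])
    have L: "Lpp q v > 0"
      using Lpp_pos[OF vD(1) x] q by simp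
    have "quad_form lam v / Lpp q v \<le> 1 / \<beta>"
      using Lpp[OF v] \<beta> L by (simp add: field_simps mult.commute)
    then have "(quad_form lam v / Lpp q v) powr (2 / (q - 2)) \<le> (1 / \<beta>) powr (2 / (q - 2))"
      using Q L q by (intro powr_mono2) auto
    also have "\<dots> = \<beta> powr (- 2 / (q - 2))"
      using \<beta> by (simp add: powr_divide powr_minus_divide)
    finally have "J_action q lam w \<le> (1/2 - 1/q) * \<beta> powr (- 2 / (q - 2)) * quad_form lam v"
      unfolding w(2) using cq Q by (intro mult_right_mono mult_left_mono) auto
    also have "quad_form lam v = J_action r lam v / (1/2 - 1/r)"
      unfolding vD(4) using r by (intro nonzero_mult_div_cancel_left[symmetric]) simp
    finally show ?thesis
      using ground_level_le[OF lam q w(1)] by (simp add: field_simps)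
  qed
  then show ?thesis
    unfolding ground_level_def[of r lam]
    using cq cr B[unfolded ground_level_def]
    by (intro le_mult_INF_if_near_minimizers Nehari_nonempty[OF r lam] bdd_below_J_action_Nehari[OF lam r])
      auto
qed

section \<open>Changing the exponent\<close>

definition Nehari_sup_bound :: "real \<Rightarrow> real \<Rightarrow> real \<Rightarrow> real" where
  "Nehari_sup_bound r lam B = 3 + 2 * B / ((1/2 - 1/r) * min 1 lam)"

lemma Nehari_abs_le_sup_bound:
  assumes v: "v \<in> Nehari r lam" and JB: "J_action r lam v < B" and lam: "lam > 0" and r: "r > 2"
    and t: "t \<in> {0..1}"
  shows "\<bar>v (edge_path e t)\<bar> \<le> Nehari_sup_bound r lam B"
proof -
  note vD = Nehari_D[OF v]
  have cr: "1/2 - 1/r > 0"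
    using r by (simp add: field_simps)
  have c: "(1/2 - 1/r) * min 1 lam > 0"
    using cr lam by simp
  have "(D2sq v + L2sq v) * ((1/2 - 1/r) * min 1 lam) = (1/2 - 1/r) * (min 1 lam * (D2sq v + L2sq v))"
    by (simp add: ac_simps)
  also have "\<dots> \<le> (1/2 - 1/r) * quad_form lam v"
    using quad_form_ge(2)[OF vD(1) lam] cr by (intro mult_left_mono) auto
  also have "\<dots> < B"
    using JB vD(4) by simp
  finally have "D2sq v + L2sq v \<le> B / ((1/2 - 1/r) * min 1 lam)"
    by (subst pos_le_divide_eq[OF c]) (rule less_imp_le)
  then show ?thesis
    using H1_ladder_abs_le[OF vD(1) t, of e] unfolding Nehari_sup_bound_def by simp
qed

lemma Nehari_sup_bound_pos:
  assumes r: "r > 2" and lam: "lam > 0" and B: "B \<ge> 0"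
  shows "Nehari_sup_bound r lam B > 0"
proof -
  have "1/2 - 1/r > 0"
    using r by (simp add: field_simps)
  then have "(1/2 - 1/r) * min 1 lam > 0"
    using lam by simp
  then have "2 * B / ((1/2 - 1/r) * min 1 lam) \<ge> 0"
    using B by simp
  then show ?thesis
    unfolding Nehari_sup_bound_def by simp
qed

definition factor_down :: "real \<Rightarrow> real \<Rightarrow> real \<Rightarrow> real" where
  "factor_down q r M = (1/2 - 1/q) / (1/2 - 1/r) * M powr (2 * (r - q) / (q - 2))"

lemma ground_level_le_factor_down:
  assumes lam: "lam > 0" and q: "2 < q" "q \<le> r" and B: "ground_level r lam < B"
  shows "ground_level q lam \<le> factor_down q r (Nehari_sup_bound r lam B) * ground_level r lam"
proof -
  define M where "M = Nehari_sup_bound r lam B"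
  have r: "r > 2"
    using q by simp
  have M: "M > 0"
    unfolding M_def using B ground_level_nonneg[OF lam r] by (intro Nehari_sup_bound_pos r lam) simp
  have "ground_level q lam \<le> (1/2 - 1/q) / (1/2 - 1/r) * (M powr (q - r)) powr (- 2 / (q - 2))
      * ground_level r lam"
  proof (rule ground_level_le_of_Lpp_ge[OF lam q(1) r _ B])
    fix v assume v: "v \<in> Nehari r lam" "J_action r lam v < B"
    have "M powr (q - r) * Lpp r v - 0 * L2sq v \<le> Lpp q v"
      using Nehari_abs_le_sup_bound[OF v lam r, folded M_def] q powr_ge_of_abs_le
      by (intro Lpp_ge_of_pointwise[OF Nehari_D(1)[OF v(1)]]) auto
    then show "M powr (q - r) * quad_form lam v \<le> Lpp q v"
      using Nehari_D(3)[OF v(1)] by simp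
  qed (use M in simp)
  also have "(q - r) * (- 2 / (q - 2)) = 2 * (r - q) / (q - 2)"
    using q by (simp add: field_simps)
  then have "(M powr (q - r)) powr (- 2 / (q - 2)) = M powr (2 * (r - q) / (q - 2))"
    by (simp add: powr_powr)
  finally show ?thesis
    unfolding factor_down_def M_def by simp
qed

text \<open>The gap q - r serves as the splitting level \<open>\<delta>\<close> of \<open>powr_le_powr_add_sq\<close>.\<close>
definition factor_up :: "real \<Rightarrow> real \<Rightarrow> real \<Rightarrow> real" where
  "factor_up lam q r = (1/2 - 1/q) / (1/2 - 1/r) *
     ((q - r) powr (q - r) * (1 - (q - r) powr (r - 2) / lam)) powr (- 2 / (q - 2))"

lemma ground_level_le_factor_up:
  assumes lam: "lam > 0" and r: "2 < r" "r < q" and small: "(q - r) powr (r - 2) < lam"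
  shows "ground_level q lam \<le> factor_up lam q r * ground_level r lam"
  unfolding factor_up_def
proof (rule ground_level_le_of_Lpp_ge[OF lam _ r(1) _ less_add_one])
  define \<delta> where "\<delta> = q - r"
  have \<delta>: "\<delta> > 0"
    unfolding \<delta>_def using r by simp
  fix v assume v: "v \<in> Nehari r lam"
  note vD = Nehari_D[OF v]
  have "\<delta> powr (q - r) * Lpp r v - \<delta> powr (q - 2) * L2sq v \<le> Lpp q v"
    using r powr_le_powr_add_sq[OF \<delta>, of r q]
    by (intro Lpp_ge_of_pointwise[OF vD(1) _ _ H1_ladder_abs_le[OF vD(1)]]) (auto simp: algebra_simps)
  moreover have "\<delta> powr (q - 2) * L2sq v \<le> \<delta> powr (q - r) * (\<delta> powr (r - 2) / lam) * quad_form lam v"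
  proof -
    have "L2sq v \<le> quad_form lam v / lam"
      using quad_form_ge(1)[OF vD(1) lam] lam by (simp add: field_simps)
    then have "\<delta> powr (q - 2) * L2sq v \<le> \<delta> powr (q - 2) * (quad_form lam v / lam)"
      by (rule mult_left_mono) simp
    moreover have "\<delta> powr (q - 2) = \<delta> powr (q - r) * \<delta> powr (r - 2)"
      by (simp add: powr_add[symmetric])
    ultimately show ?thesis
      by (simp add: algebra_simps)
  qed
  ultimately show "\<delta> powr (q - r) * (1 - \<delta> powr (r - 2) / lam) * quad_form lam v \<le> Lpp q v"
    using vD(3) by (simp add: algebra_simps)
qed (use r small lam in simp_all)

section \<open>Continuity of the ground level in the exponent\<close>

lemma factor_down_tendsto:
  assumes q: "(q \<longlongrightarrow> p) F" and r: "(r \<longlongrightarrow> p) F" and M: "(M \<longlongrightarrow> M0) F" "M0 > 0"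
    and p: "p > 2"
  shows "((\<lambda>x. factor_down (q x) (r x) (M x)) \<longlongrightarrow> 1) F"
proof -
  have "((\<lambda>x. factor_down (q x) (r x) (M x)) \<longlongrightarrow> factor_down p p M0) F"
    unfolding factor_down_def using p M(2) by (intro tendsto_intros q r M) auto
  then show ?thesis
    using p M(2) by (simp add: factor_down_def)
qed

lemma gap_powr_tendsto_0:
  fixes q r :: "'a \<Rightarrow> real"
  assumes gap: "filterlim (\<lambda>x. q x - r x) (at_right 0) F" and r: "(r \<longlongrightarrow> p) F" and p: "p > 2"
  shows "((\<lambda>x. (q x - r x) powr (r x - 2)) \<longlongrightarrow> 0) F"
proof (rule tendsto_zero_powrI)
  show "((\<lambda>x. q x - r x) \<longlongrightarrow> 0) F" "\<forall>\<^sub>F x in F. 0 \<le> q x - r x"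
    using gap unfolding filterlim_at by (auto elim: eventually_mono)
qed (use r p in \<open>auto intro: tendsto_intros\<close>)

lemma factor_up_tendsto:
  assumes gap: "filterlim (\<lambda>x. q x - r x) (at_right 0) F" and r: "(r \<longlongrightarrow> p) F"
    and p: "p > 2" and lam: "lam > 0"
  shows "((\<lambda>x. factor_up lam (q x) (r x)) \<longlongrightarrow> 1) F"
proof -
  have gap0: "((\<lambda>x. q x - r x) \<longlongrightarrow> 0) F"
    using gap unfolding filterlim_at by blast
  have q: "(q \<longlongrightarrow> p) F"
    using tendsto_add[OF gap0 r] by simp
  have "((\<lambda>x. (q x - r x) powr (q x - r x)) \<longlongrightarrow> 1) F"
    using filterlim_compose[OF powr_self_tendsto_1 gap] by simp
  then have "((\<lambda>x. factor_up lam (q x) (r x)) \<longlongrightarrow>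
      (1/2 - 1/p) / (1/2 - 1/p) * (1 * (1 - 0 / lam)) powr (- 2 / (p - 2))) F"
    unfolding factor_up_def using p lam
    by (intro tendsto_intros q r gap_powr_tendsto_0[OF gap r p]) auto
  then show ?thesis
    using p by simp
qed

lemma eventually_ground_level_le_factor_up:
  assumes gap: "filterlim (\<lambda>x. q x - r x) (at_right 0) F" and r: "(r \<longlongrightarrow> p) F"
    and p: "p > 2" and lam: "lam > 0"
  shows "eventually (\<lambda>x. ground_level (q x) lam \<le> factor_up lam (q x) (r x) * ground_level (r x) lam) F"
proof -
  have "eventually (\<lambda>x. r x > 2) F"
    using order_tendstoD(1)[OF r p] .
  moreover have "eventually (\<lambda>x. q x - r x > 0) F"
    using gap unfolding filterlim_at by (auto elim: eventually_mono)
  moreover have "eventually (\<lambda>x. (q x - r x) powr (r x - 2) < lam) F"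
    using order_tendstoD(2)[OF gap_powr_tendsto_0[OF gap r p] lam] .
  ultimately show ?thesis
    by eventually_elim (auto intro: ground_level_le_factor_up[OF lam])
qed

lemma ground_level_tendsto_left:
  assumes pbar: "2 < pbar" and lam: "lam > 0"
  shows "((\<lambda>p. ground_level p lam) \<longlongrightarrow> ground_level pbar lam) (at_left pbar)"
proof (rule tendsto_of_ratio_bounds)
  define B where "B = ground_level pbar lam + 1"
  show "eventually (\<lambda>p. ground_level p lam \<le>
      factor_down p pbar (Nehari_sup_bound pbar lam B) * ground_level pbar lam) (at_left pbar)"
    using eventually_at_left_real[OF pbar]
    by eventually_elim (auto intro: ground_level_le_factor_down[OF lam] simp: B_def)
  have gap: "filterlim (\<lambda>p. pbar - p) (at_right 0) (at_left pbar)"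
    by (intro tendsto_imp_filterlim_at_right tendsto_eq_intros tendsto_ident_at)
      (auto simp: eventually_at_filter)
  show "eventually (\<lambda>p. ground_level pbar lam \<le> factor_up lam pbar p * ground_level p lam) (at_left pbar)"
    by (rule eventually_ground_level_le_factor_up[OF gap tendsto_ident_at pbar lam])
  show "((\<lambda>p. factor_up lam pbar p) \<longlongrightarrow> 1) (at_left pbar)"
    by (rule factor_up_tendsto[OF gap tendsto_ident_at pbar lam])
  have "Nehari_sup_bound pbar lam B > 0"
    unfolding B_def using ground_level_nonneg[OF lam pbar] by (intro Nehari_sup_bound_pos pbar lam) simp
  then show "((\<lambda>p. factor_down p pbar (Nehari_sup_bound pbar lam B)) \<longlongrightarrow> 1) (at_left pbar)"
    by (rule factor_down_tendsto[OF tendsto_ident_at tendsto_const tendsto_const _ pbar])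
qed

lemma ground_level_tendsto_right:
  assumes pbar: "2 < pbar" and lam: "lam > 0"
  shows "((\<lambda>p. ground_level p lam) \<longlongrightarrow> ground_level pbar lam) (at_right pbar)"
proof (rule tendsto_of_ratio_bounds)
  define B where "B = ground_level pbar lam + 1"
  have gap: "filterlim (\<lambda>p. p - pbar) (at_right 0) (at_right pbar)"
    by (intro tendsto_imp_filterlim_at_right tendsto_eq_intros tendsto_ident_at)
      (auto simp: eventually_at_filter)
  show upper: "eventually (\<lambda>p. ground_level p lam \<le> factor_up lam p pbar * ground_level pbar lam)
      (at_right pbar)"
    by (rule eventually_ground_level_le_factor_up[OF gap tendsto_const pbar lam])
  show U: "((\<lambda>p. factor_up lam p pbar) \<longlongrightarrow> 1) (at_right pbar)"
    by (rule factor_up_tendsto[OF gap tendsto_const pbar lam])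
  have "eventually (\<lambda>p. factor_up lam p pbar * ground_level pbar lam < B) (at_right pbar)"
    using tendsto_mult[OF U tendsto_const, of "ground_level pbar lam"]
    by (intro order_tendstoD(2)) (auto simp: B_def)
  with upper have below_B: "eventually (\<lambda>p. ground_level p lam < B) (at_right pbar)"
    by eventually_elim simp
  show "eventually (\<lambda>p. ground_level pbar lam \<le>
      factor_down pbar p (Nehari_sup_bound p lam B) * ground_level p lam) (at_right pbar)"
    using below_B eventually_at_right_real[OF less_add_one[of pbar]]
    by eventually_elim (use pbar in \<open>auto intro: ground_level_le_factor_down[OF lam]\<close>)
  have "((\<lambda>p. Nehari_sup_bound p lam B) \<longlongrightarrow> Nehari_sup_bound pbar lam B) (at_right pbar)"
    unfolding Nehari_sup_bound_def using pbar lam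
    by (intro tendsto_intros tendsto_ident_at) (auto simp: field_simps)
  moreover have "Nehari_sup_bound pbar lam B > 0"
    unfolding B_def using ground_level_nonneg[OF lam pbar] by (intro Nehari_sup_bound_pos pbar lam) simp
  ultimately show "((\<lambda>p. factor_down pbar p (Nehari_sup_bound p lam B)) \<longlongrightarrow> 1) (at_right pbar)"
    by (rule factor_down_tendsto[OF tendsto_const tendsto_ident_at _ _ pbar])
qed

theorem lemma6p1:
  fixes pbar lam :: real
  assumes "2 < pbar" and "lam > 0"
  shows "((\<lambda>p. ground_level p lam) \<longlongrightarrow> ground_level pbar lam) (at pbar)"
  using ground_level_tendsto_left[OF assms] ground_level_tendsto_right[OF assms]
  by (rule filterlim_split_at)

end
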